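(* Suppose $X=\{0,1\}^n$, $R(X)=[0,1]^n$, and $Q:[0,1]^n \to \mathbb{R}$ is an extension of $Q'$ which is component-wise monotone on $[0,1]^n$, i.e., for each $i \in [n]$, $Q$ is either nondecreasing in $x_i$ or nonincreasing in $x_i$ (with the other coordinates fixed). Let $I \subseteq [n]$ be nonempty and let $\mu\in\mathbb{R}^n$, $\eta\in\mathbb{R}$ with $\mu_i=0$ for all $i\notin I$. Then the inequality $\theta\geq \mu^T \mathbf{x}+\eta$ is valid for $E=\{(\theta,\mathbf{x})\in\mathbb{R}\times X:\theta\geq Q'(\mathbf{x})\}$ if and only if it is valid for $E_I^Q$.
   Context: $Q':\{0,1\}^n\to\mathbb{R}$ is a function, and $Q$ is an extension of $Q'$ to $[0,1]^n$, i.e., $Q(\mathbf{x})=Q'(\mathbf{x})$ for $\mathbf{x}\in\{0,1\}^n$. Let $E^Q := \{(\theta,\mathbf{x}) \in \mathbb{R}\times [0,1]^n : \theta \geq Q(\mathbf{x})\}$. For $I \subseteq [n]$ and $\chi \in \{0,1\}^I$, $E_I^Q(\chi) := \{(\theta,\mathbf{x}) \in E^Q : \mathbf{x}_I = \chi\}$ and $E_I^Q := \bigcup_{\chi \in \{0,1\}^I} E_I^Q(\chi)$, where $\mathbf{x}_I$ is the subvector of $\mathbf{x}$ indexed by $I$. *)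

theory Defs
  imports "HOL-Analysis.Analysis"
begin

text \<open>Dimension n = CARD('n); vectors in R^n are real^'n; indices [n] are elements of 'n.\<close>

definition binary_points :: "(real^'n) set" where
  "binary_points = {x. \<forall>i. x$i \<in> {0,1}}"

definition unit_cube :: "(real^'n) set" where
  "unit_cube = {x. \<forall>i. 0 \<le> x$i \<and> x$i \<le> 1}"

definition is_extension :: "(real^'n \<Rightarrow> real) \<Rightarrow> (real^'n \<Rightarrow> real) \<Rightarrow> bool" where
  "is_extension Q Q' \<longleftrightarrow> (\<forall>x\<in>binary_points. Q x = Q' x)"

definition componentwise_monotone :: "(real^'n \<Rightarrow> real) \<Rightarrow> bool" where
  "componentwise_monotone Q \<longleftrightarrow>
    (\<forall>i. (\<forall>x\<in>unit_cube. \<forall>y\<in>unit_cube. (\<forall>j. j \<noteq> i \<longrightarrow> x$j = y$j) \<and> x$i \<le> y$i \<longrightarrow> Q x \<le> Q y)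
       \<or> (\<forall>x\<in>unit_cube. \<forall>y\<in>unit_cube. (\<forall>j. j \<noteq> i \<longrightarrow> x$j = y$j) \<and> x$i \<le> y$i \<longrightarrow> Q x \<ge> Q y))"

definition E_set :: "(real^'n \<Rightarrow> real) \<Rightarrow> (real \<times> (real^'n)) set" where
  "E_set Q' = {(\<theta>, x). x \<in> binary_points \<and> \<theta> \<ge> Q' x}"

definition EQ :: "(real^'n \<Rightarrow> real) \<Rightarrow> (real \<times> (real^'n)) set" where
  "EQ Q = {(\<theta>, x). x \<in> unit_cube \<and> \<theta> \<ge> Q x}"

definition EQ_I_chi :: "(real^'n \<Rightarrow> real) \<Rightarrow> 'n set \<Rightarrow> ('n \<Rightarrow> real) \<Rightarrow> (real \<times> (real^'n)) set" where
  "EQ_I_chi Q I ch = {p \<in> EQ Q. \<forall>i\<in>I. (snd p)$i = ch i}"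

definition EQ_I :: "(real^'n \<Rightarrow> real) \<Rightarrow> 'n set \<Rightarrow> (real \<times> (real^'n)) set" where
  "EQ_I Q I = (\<Union>ch\<in>{ch. \<forall>i\<in>I. ch i \<in> {0,1}}. EQ_I_chi Q I ch)"

definition valid_ineq :: "real^'n \<Rightarrow> real \<Rightarrow> (real \<times> (real^'n)) set \<Rightarrow> bool" where
  "valid_ineq \<mu> \<eta> S \<longleftrightarrow> (\<forall>(\<theta>, x)\<in>S. \<theta> \<ge> \<mu> \<bullet> x + \<eta>)"

end

theory Submission
  imports Defs
begin

text \<open>A point of E_I^Q has vertex coordinates on I. Since Q is monotone in each coordinate,
  every remaining fractional coordinate can be pushed to the end of [0,1] at which Q does not
  increase; this yields a vertex of the cube with the same coordinates on I, hence the same value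
  of mu^T x, and no larger value of Q. Conversely every point of E already lies in E_I^Q.\<close>

lemma binary_points_subset_unit_cube: "binary_points \<subseteq> unit_cube"
proof
  fix x :: "real^'n" assume bin: "x \<in> binary_points"
  have "0 \<le> x$i \<and> x$i \<le> 1" for i
    using bin[unfolded binary_points_def, simplified, rule_format, of i] by auto
  then show "x \<in> unit_cube"
    by (simp add: unit_cube_def)
qed

lemma componentwise_monotone_round_coordinate:
  assumes mono: "componentwise_monotone Q" and x: "x \<in> unit_cube"
  obtains c :: real where "c \<in> {0, 1}" and "Q (\<chi> j. if j = a then c else x$j) \<le> Q x"
proof -
  define x0 where "x0 = (\<chi> j. if j = a then 0 else x$j)"
  define x1 where "x1 = (\<chi> j. if j = a then 1 else x$j)"
  have cube: "x0 \<in> unit_cube" "x1 \<in> unit_cube"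
    using x by (auto simp: unit_cube_def x0_def x1_def)
  have coord: "x0$a \<le> x$a" "x$a \<le> x1$a"
    using x by (auto simp: unit_cube_def x0_def x1_def)
  have others: "\<forall>j. j \<noteq> a \<longrightarrow> x0$j = x$j" "\<forall>j. j \<noteq> a \<longrightarrow> x$j = x1$j"
    by (auto simp: x0_def x1_def)
  from mono[unfolded componentwise_monotone_def, rule_format, of a] show thesis
  proof
    assume "\<forall>x\<in>unit_cube. \<forall>y\<in>unit_cube. (\<forall>j. j \<noteq> a \<longrightarrow> x$j = y$j) \<and> x$a \<le> y$a \<longrightarrow> Q x \<le> Q y"
    then have "Q x0 \<le> Q x"
      using cube(1) x coord(1) others(1) by blast
    then show thesis
      using that[of 0] by (simp add: x0_def)
  next
    assume "\<forall>x\<in>unit_cube. \<forall>y\<in>unit_cube. (\<forall>j. j \<noteq> a \<longrightarrow> x$j = y$j) \<and> x$a \<le> y$a \<longrightarrow> Q x \<ge> Q y"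
    then have "Q x1 \<le> Q x"
      using cube(2) x coord(2) others(2) by blast
    then show thesis
      using that[of 1] by (simp add: x1_def)
  qed
qed

lemma componentwise_monotone_round_to_vertex:
  fixes Q :: "real^'n \<Rightarrow> real" and S :: "'n set"
  assumes mono: "componentwise_monotone Q" and x: "x \<in> unit_cube"
  obtains y where "y \<in> unit_cube" and "\<forall>j. j \<notin> S \<longrightarrow> y$j = x$j"
    and "\<forall>j\<in>S. y$j \<in> {0, 1}" and "Q y \<le> Q x"
proof -
  have "\<exists>y\<in>unit_cube. (\<forall>j. j \<notin> S \<longrightarrow> y$j = x$j) \<and> (\<forall>j\<in>S. y$j \<in> {0, 1}) \<and> Q y \<le> Q x"
    if "finite S" "x \<in> unit_cube" for S x
    using that
  proof (induction S arbitrary: x rule: finite_induct)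
    case empty
    then show ?case by auto
  next
    case (insert a S)
    obtain c :: real where c: "c \<in> {0, 1}" and le: "Q (\<chi> j. if j = a then c else x$j) \<le> Q x"
      using componentwise_monotone_round_coordinate[OF mono \<open>x \<in> unit_cube\<close>] by blast
    define x' where "x' = (\<chi> j. if j = a then c else x$j)"
    have "x' \<in> unit_cube"
      using insert.prems c by (auto simp: unit_cube_def x'_def)
    then obtain y where y: "y \<in> unit_cube" "\<forall>j. j \<notin> S \<longrightarrow> y$j = x'$j"
        "\<forall>j\<in>S. y$j \<in> {0, 1}" "Q y \<le> Q x'"
      using insert.IH by blast
    have "\<forall>j. j \<notin> insert a S \<longrightarrow> y$j = x$j"
      using y(2) by (auto simp: x'_def)
    moreover have "\<forall>j\<in>insert a S. y$j \<in> {0, 1}"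
      using y(2,3) c insert.hyps(2) by (auto simp: x'_def)
    moreover have "Q y \<le> Q x"
      using y(4) le by (simp add: x'_def)
    ultimately show ?case
      using y(1) by blast
  qed
  then show thesis
    using that finite[of S] x by blast
qed

lemma valid_ineq_subset: "S \<subseteq> T \<Longrightarrow> valid_ineq \<mu> \<eta> T \<Longrightarrow> valid_ineq \<mu> \<eta> S"
  unfolding valid_ineq_def by blast

lemma E_set_subset_EQ_I:
  assumes "is_extension Q Q'"
  shows "E_set Q' \<subseteq> EQ_I Q I"
proof clarify
  fix \<theta> x assume "(\<theta>, x) \<in> E_set Q'"
  then have bin: "x \<in> binary_points" and ge: "Q' x \<le> \<theta>"
    by (auto simp: E_set_def)
  have "x \<in> unit_cube"
    using bin binary_points_subset_unit_cube by blast
  moreover have "Q x = Q' x"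
    using assms bin by (simp add: is_extension_def)
  ultimately have "(\<theta>, x) \<in> EQ_I_chi Q I (\<lambda>i. x$i)"
    using ge by (simp add: EQ_I_chi_def EQ_def)
  moreover have "\<forall>i\<in>I. x$i \<in> {0, 1}"
    using bin by (simp add: binary_points_def)
  ultimately show "(\<theta>, x) \<in> EQ_I Q I"
    unfolding EQ_I_def by blast
qed

lemma EQ_I_dominated_by_vertex:
  assumes mono: "componentwise_monotone Q" and "(\<theta>, x) \<in> EQ_I Q I"
  obtains y where "y \<in> binary_points" and "\<forall>i\<in>I. y$i = x$i" and "Q y \<le> \<theta>"
proof -
  obtain ch where ch: "\<forall>i\<in>I. ch i \<in> {0, 1}" and "(\<theta>, x) \<in> EQ_I_chi Q I ch"
    using assms(2) unfolding EQ_I_def by blast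
  then have cube: "x \<in> unit_cube" and ge: "Q x \<le> \<theta>" and fixed: "\<forall>i\<in>I. x$i = ch i"
    by (auto simp: EQ_I_chi_def EQ_def)
  obtain y where "y \<in> unit_cube" and y: "\<forall>j. j \<notin> - I \<longrightarrow> y$j = x$j"
      "\<forall>j\<in>- I. y$j \<in> {0, 1}" "Q y \<le> Q x"
    by (rule componentwise_monotone_round_to_vertex[OF mono cube])
  have "y$i \<in> {0, 1}" for i
    by (cases "i \<in> I") (use y(1,2) fixed ch in auto)
  then have "y \<in> binary_points"
    by (simp add: binary_points_def)
  moreover have "\<forall>i\<in>I. y$i = x$i"
    using y(1) by simp
  moreover have "Q y \<le> \<theta>"
    using y(3) ge by linarith
  ultimately show thesis
    using that by blast
qed

lemma inner_eq_if_agree_on_support: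
  fixes \<mu> x y :: "real^'n"
  assumes "\<forall>i. i \<notin> I \<longrightarrow> \<mu>$i = 0" and "\<forall>i\<in>I. x$i = y$i"
  shows "\<mu> \<bullet> x = \<mu> \<bullet> y"
  unfolding inner_vec_def
proof (rule sum.cong[OF refl])
  fix i
  show "\<mu>$i \<bullet> x$i = \<mu>$i \<bullet> y$i"
    by (cases "i \<in> I") (use assms in auto)
qed

theorem corollary1:
  fixes Q Q' :: "real^'n \<Rightarrow> real" and I :: "'n set" and \<mu> :: "real^'n" and \<eta> :: real
  assumes "is_extension Q Q'"
    and "componentwise_monotone Q"
    and "I \<noteq> {}"
    and "\<forall>i. i \<notin> I \<longrightarrow> \<mu>$i = 0"
  shows "valid_ineq \<mu> \<eta> (E_set Q') \<longleftrightarrow> valid_ineq \<mu> \<eta> (EQ_I Q I)"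
proof
  assume valid: "valid_ineq \<mu> \<eta> (E_set Q')"
  show "valid_ineq \<mu> \<eta> (EQ_I Q I)"
    unfolding valid_ineq_def
  proof clarify
    fix \<theta> x assume "(\<theta>, x) \<in> EQ_I Q I"
    then obtain y where bin: "y \<in> binary_points" and agree: "\<forall>i\<in>I. y$i = x$i" and le: "Q y \<le> \<theta>"
      using EQ_I_dominated_by_vertex[OF assms(2)] by blast
    have "(Q' y, y) \<in> E_set Q'"
      by (simp add: E_set_def bin)
    then have "\<mu> \<bullet> y + \<eta> \<le> Q' y"
      using valid unfolding valid_ineq_def by blast
    moreover have "Q' y = Q y"
      using assms(1) bin by (simp add: is_extension_def)
    moreover have "\<mu> \<bullet> y = \<mu> \<bullet> x"
      using inner_eq_if_agree_on_support[OF assms(4) agree] .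
    ultimately show "\<mu> \<bullet> x + \<eta> \<le> \<theta>"
      using le by linarith
  qed
qed (rule valid_ineq_subset[OF E_set_subset_EQ_I[OF assms(1)]])

end
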